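(* Let $G$ and $H$ be word-representable graphs with $|G| \ge |H|$. Then $l(G \,\square\, H) \le |H|\,l(G) + |G|\,l(H) + (|H|^2 - 1)|G|$.
   Context: All graphs are simple and undirected; $|G|$ denotes the number of vertices of $G$. Letters $x,y$ alternate in a word $w$ if deleting all other letters from $w$ yields $xyxy\ldots$ or $yxyx\ldots$ (of either parity). A word $w$ over $V(G)$ represents $G$ if every vertex occurs in $w$ and for all distinct $x,y$, $xy\in E(G)$ iff $x,y$ alternate in $w$; $G$ is word-representable if such a word exists, and $l(G)$ is the minimum length of a word representing $G$. The Cartesian product $G\,\square\,H$ has vertex set $V(G)\times V(H)$, with $(u,v)$ adjacent to $(u',v')$ iff either $u=u'$ and $vv'\in E(H)$, or $v=v'$ and $uu'\in E(G)$. *)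

theory Defs
  imports Main
begin

definition simple_graph :: "'a set \<Rightarrow> ('a \<Rightarrow> 'a \<Rightarrow> bool) \<Rightarrow> bool" where
  "simple_graph V E \<longleftrightarrow> finite V \<and> (\<forall>x y. E x y \<longrightarrow> x \<in> V \<and> y \<in> V \<and> x \<noteq> y)
     \<and> (\<forall>x y. E x y \<longrightarrow> E y x)"

definition no_adj_repeat :: "'a list \<Rightarrow> bool" where
  "no_adj_repeat xs \<longleftrightarrow> (\<forall>i. Suc i < length xs \<longrightarrow> xs ! i \<noteq> xs ! Suc i)"

definition alternate :: "'a list \<Rightarrow> 'a \<Rightarrow> 'a \<Rightarrow> bool" where
  "alternate w x y \<longleftrightarrow> no_adj_repeat (filter (\<lambda>z. z = x \<or> z = y) w)"

definition represents :: "'a set \<Rightarrow> ('a \<Rightarrow> 'a \<Rightarrow> bool) \<Rightarrow> 'a list \<Rightarrow> bool" where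
  "represents V E w \<longleftrightarrow> set w = V \<and>
     (\<forall>x\<in>V. \<forall>y\<in>V. x \<noteq> y \<longrightarrow> (E x y \<longleftrightarrow> alternate w x y))"

definition word_representable :: "'a set \<Rightarrow> ('a \<Rightarrow> 'a \<Rightarrow> bool) \<Rightarrow> bool" where
  "word_representable V E \<longleftrightarrow> (\<exists>w. represents V E w)"

definition min_rep_length :: "'a set \<Rightarrow> ('a \<Rightarrow> 'a \<Rightarrow> bool) \<Rightarrow> nat" where
  "min_rep_length V E = (LEAST n. \<exists>w. represents V E w \<and> length w = n)"

definition cart_edge :: "('a \<Rightarrow> 'a \<Rightarrow> bool) \<Rightarrow> ('b \<Rightarrow> 'b \<Rightarrow> bool) \<Rightarrow> ('a \<times> 'b) \<Rightarrow> ('a \<times> 'b) \<Rightarrow> bool" where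
  "cart_edge E1 E2 p q \<longleftrightarrow>
     (fst p = fst q \<and> E2 (snd p) (snd q)) \<or> (snd p = snd q \<and> E1 (fst p) (fst q))"

end

theory Submission
  imports Defs
begin

text \<open>Take words u and w of minimal length representing G and H, and let t list V(H) in order of
last occurrence in w. The representing word of G \<box> H first replaces every letter g of u by the
block (g, h_1) ... (g, h_n), where h_1, ..., h_n lists V(H) in order of first occurrence
in w. It then appends, for a sequence of segments S over V(H), the blocks V(G) \<times> S with V(G) in
order of last occurrence in u: first the letters of w one at a time, then all rotations of t but
one, interleaved with single letters so that these segments spell t^|H| without its last
letter. Then (g, h), (g, h') alternate iff h, h' alternate in w, and (g, h), (g', h) alternate iff
g, g' alternate in u. For g \<noteq> g' and h \<noteq> h' some rotation lists h, h' in the order opposite to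
the one alternation would force, and the omitted rotation is chosen so that such a rotation always
remains. Counting letters gives |H| l(G) + |G| (l(H) + |H|^2 - 1).\<close>

section \<open>Alternation in words\<close>

abbreviation restr :: "'a list \<Rightarrow> 'a \<Rightarrow> 'a \<Rightarrow> 'a list" where
  "restr w x y \<equiv> filter (\<lambda>z. z = x \<or> z = y) w"

lemma restr_commute: "restr w x y = restr w y x"
  by (rule filter_cong) auto

lemma alternate_commute: "alternate w x y \<longleftrightarrow> alternate w y x"
  unfolding alternate_def by (simp only: restr_commute)

lemma no_adj_repeat_iff_successively: "no_adj_repeat xs \<longleftrightarrow> successively (\<noteq>) xs"
  by (simp add: no_adj_repeat_def successively_conv_nth)

lemma no_adj_repeat_Nil [simp]: "no_adj_repeat []"
  and no_adj_repeat_singleton [simp]: "no_adj_repeat [x]"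
  and no_adj_repeat_Cons_Cons [simp]:
    "no_adj_repeat (x # y # xs) \<longleftrightarrow> x \<noteq> y \<and> no_adj_repeat (y # xs)"
  by (simp_all add: no_adj_repeat_iff_successively)

lemma no_adj_repeat_Cons:
  "no_adj_repeat (x # xs) \<longleftrightarrow> xs = [] \<or> x \<noteq> hd xs \<and> no_adj_repeat xs"
  by (simp add: no_adj_repeat_iff_successively successively_Cons)

lemma no_adj_repeat_append:
  "no_adj_repeat (xs @ ys) \<longleftrightarrow>
     no_adj_repeat xs \<and> no_adj_repeat ys \<and> (xs \<noteq> [] \<longrightarrow> ys \<noteq> [] \<longrightarrow> last xs \<noteq> hd ys)"
  by (auto simp: no_adj_repeat_iff_successively successively_append_iff)

lemma no_adj_repeat_map:
  "inj_on f (set xs) \<Longrightarrow> no_adj_repeat (map f xs) \<longleftrightarrow> no_adj_repeat xs"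
  unfolding no_adj_repeat_iff_successively successively_map
  by (rule successively_cong) (auto simp: inj_on_def)

lemma hd_replicate_pair: "c > 0 \<Longrightarrow> hd (concat (replicate c [a, b])) = a"
  by (cases c) auto

lemma last_replicate_pair: "c > 0 \<Longrightarrow> last (concat (replicate c [a, b])) = b"
  by (induction c) auto

lemma no_adj_repeat_replicate_pair:
  "a \<noteq> b \<Longrightarrow> no_adj_repeat (concat (replicate c [a, b]))"
  by (induction c) (auto simp: no_adj_repeat_Cons hd_replicate_pair)

lemma no_adj_repeat_append_replicate_pair:
  assumes "a \<noteq> b" "xs \<noteq> []" "last xs = b"
  shows "no_adj_repeat (xs @ concat (replicate c [a, b])) \<longleftrightarrow> no_adj_repeat xs"
  using assms no_adj_repeat_replicate_pair[OF assms(1)] hd_replicate_pair[of c a b]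
  by (auto simp: no_adj_repeat_append)

lemma no_adj_repeat_replicate_pair_append:
  assumes "a \<noteq> b" "c > 0" "ys \<noteq> []" "hd ys = a"
  shows "no_adj_repeat (concat (replicate c [a, b]) @ ys) \<longleftrightarrow> no_adj_repeat ys"
  using assms no_adj_repeat_replicate_pair[OF assms(1)] last_replicate_pair[of c a b]
  by (auto simp: no_adj_repeat_append)

lemma count_list_alternating_diff:
  assumes "no_adj_repeat (x # xs)" "set (x # xs) \<subseteq> {a, b}" "a \<noteq> b"
  shows "int (count_list (x # xs) a) - int (count_list (x # xs) b) =
    (if last (x # xs) = x then if x = a then 1 else -1 else 0)"
  using assms
proof (induction xs arbitrary: x)
  case (Cons y ys)
  have IH: "int (count_list (y # ys) a) - int (count_list (y # ys) b) =
      (if last (y # ys) = y then if y = a then 1 else -1 else 0)"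
    using Cons by simp
  have "int (count_list (x # y # ys) a) - int (count_list (x # y # ys) b) =
      (if x = a then 1 else -1) + (int (count_list (y # ys) a) - int (count_list (y # ys) b))"
    using Cons.prems by auto
  moreover have "last (y # ys) \<in> {a, b}"
    using Cons.prems(2) by (metis last_in_set list.distinct(1) set_subset_Cons subsetD)
  ultimately show ?case
    using IH Cons.prems by auto
qed auto

lemma count_list_alternating:
  assumes "no_adj_repeat xs" "set xs \<subseteq> {a, b}" "a \<noteq> b" "xs \<noteq> []"
  shows "count_list xs a = count_list xs b \<longleftrightarrow> last xs \<noteq> hd xs"
proof -
  obtain x ys where xs: "xs = x # ys" using assms(4) by (cases xs) auto
  then have "x \<in> {a, b}" using assms(2) by auto
  then show ?thesis
    using count_list_alternating_diff[of x ys a b] assms xs by (auto split: if_splits)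
qed

lemma count_list_filter: "P x \<Longrightarrow> count_list (filter P xs) x = count_list xs x"
  by (induction xs) auto

lemma count_list_distinct: "distinct xs \<Longrightarrow> x \<in> set xs \<Longrightarrow> count_list xs x = 1"
  by (induction xs) auto

lemma concat_map_if_const:
  "concat (map (\<lambda>S. if P S then L else []) Ws) = concat (replicate (length (filter P Ws)) L)"
  by (induction Ws) auto

lemma distinct_subset_doubleton_cases:
  assumes "distinct L" "set L \<subseteq> {x, y}"
  shows "L = [] \<or> L = [x] \<or> L = [y] \<or> L = [x, y] \<or> L = [y, x]"
proof (cases L)
  case (Cons a L1)
  with assms show ?thesis
    by (cases L1; cases "tl L1") auto
qed simp

lemma pair_indices:
  assumes "x \<in> set t" "y \<in> set t" "x \<noteq> y"
  obtains i j where "i < j" "j < length t" "{t ! i, t ! j} = {x, y}"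
proof -
  obtain a b where ab: "a < length t" "b < length t" "t ! a = x" "t ! b = y"
    using assms(1,2) by (metis in_set_conv_nth)
  then have "a \<noteq> b"
    using assms(3) by auto
  then show ?thesis
    using that[of "min a b" "max a b"] ab by (auto simp: min_def max_def insert_commute)
qed

lemma restr_distinct_cases:
  assumes "distinct t" "x \<in> set t" "y \<in> set t" "x \<noteq> y"
  shows "restr t x y = [x, y] \<or> restr t x y = [y, x]"
proof -
  have "restr t x y \<in> {[], [x], [y], [x, y], [y, x]}"
    using distinct_subset_doubleton_cases[of "restr t x y" x y] assms(1) by auto
  moreover have "x \<in> set (restr t x y)" "y \<in> set (restr t x y)"
    using assms(2,3) by auto
  ultimately show ?thesis
    using assms(4) by fastforce
qed

lemma restr_remdups_cases:
  assumes "x \<in> set w" "y \<in> set w" "x \<noteq> y"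
  obtains "restr (remdups w) x y = [x, y]" | "restr (remdups w) y x = [y, x]"
  using restr_distinct_cases[of "remdups w" x y] assms restr_commute[where w="remdups w" and x=x and y=y] by auto

lemma hd_restr_first_occurrences: "hd (restr (rev (remdups (rev w))) x y) = hd (restr w x y)"
  by (simp add: rev_filter[symmetric] hd_rev remdups_filter_last last_rev)

lemma diagonal_segment_conv_restr:
  assumes "distinct S" "h \<noteq> h'" "x \<noteq> y"
  shows "(if h \<in> set S then [x] else []) @ (if h' \<in> set S then [y] else []) =
    (let L = map (\<lambda>z. if z = h then x else y) (restr S h h') in if L = [y, x] then [x, y] else L)"
proof -
  define L where "L = restr S h h'"
  have "L \<in> {[], [h], [h'], [h, h'], [h', h]}"
    using distinct_subset_doubleton_cases[of L h h'] assms(1) by (auto simp: L_def)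
  moreover have "h \<in> set S \<longleftrightarrow> h \<in> set L" "h' \<in> set S \<longleftrightarrow> h' \<in> set L"
    by (auto simp: L_def)
  ultimately show ?thesis
    unfolding L_def[symmetric] using assms(2,3) by auto
qed

lemma no_adj_repeat_swap_segment:
  assumes "ys \<noteq> []" "set ys \<subseteq> {a, b}"
    and alt: "no_adj_repeat (ys @ concat (map f Ws))"
    and "S0 \<in> set Ws" "f S0 = [b, a]"
    and "\<forall>S\<in>set Ws. set (f S) \<subseteq> {a, b}"
    and swap: "\<forall>S\<in>set Ws. s S = (if f S = [b, a] then [a, b] else f S)"
  shows "\<not> no_adj_repeat (ys @ concat (map s Ws))"
proof -
  obtain Ws1 S1 Ws2 where Ws: "Ws = Ws1 @ S1 # Ws2" "f S1 = [b, a]"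
    and before: "\<forall>S\<in>set Ws1. f S \<noteq> [b, a]"
    using split_list_first_propE[of Ws "\<lambda>S. f S = [b, a]"] assms(4,5) by blast
  define P where "P = ys @ concat (map f Ws1)"
  have "map s Ws1 = map f Ws1" "s S1 = [a, b]"
    using swap before Ws by auto
  then have s_split: "ys @ concat (map s Ws) = P @ [a, b] @ concat (map s Ws2)"
    by (simp only: P_def Ws(1) map_append list.map concat_append concat.simps append_assoc)
  have "P \<noteq> []" "set P \<subseteq> {a, b}"
    using assms(1,2,6) Ws(1) by (auto simp: P_def)
  then have "last P \<in> {a, b}"
    using last_in_set by blast
  moreover have "last P \<noteq> b"
  proof -
    have "ys @ concat (map f Ws) = P @ [b, a] @ concat (map f Ws2)"
      by (simp only: P_def Ws map_append list.map concat_append concat.simps append_assoc)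
    then show ?thesis
      using alt \<open>P \<noteq> []\<close> by (simp add: no_adj_repeat_append)
  qed
  ultimately have "last P = a" by blast
  then show ?thesis
    unfolding s_split using \<open>P \<noteq> []\<close> by (simp add: no_adj_repeat_append)
qed

section \<open>Restricting product words\<close>

lemma restr_map_Pair_same_snd:
  "distinct S \<Longrightarrow> restr (map (Pair x) S) (a, b) (a', b) =
     (if (x = a \<or> x = a') \<and> b \<in> set S then [(x, b)] else [])"
  by (induction S) auto

lemma restr_map_Pair_diagonal:
  "distinct S \<Longrightarrow> a \<noteq> a' \<Longrightarrow> restr (map (Pair x) S) (a, b) (a', b') =
     (if x = a \<and> b \<in> set S then [(a, b)] else []) @ (if x = a' \<and> b' \<in> set S then [(a', b')] else [])"
  by (induction S) auto

lemma restr_product_same_snd: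
  "distinct S \<Longrightarrow> restr (List.product A S) (a, b) (a', b) =
     (if b \<in> set S then map (\<lambda>x. (x, b)) (restr A a a') else [])"
  by (induction A) (auto simp: restr_map_Pair_same_snd)

lemma restr_product_same_fst:
  "restr (List.product A S) (a, b) (a, b') =
     concat (replicate (count_list A a) (map (Pair a) (restr S b b')))"
  by (induction A) (auto simp: filter_map comp_def)

lemma restr_product_diagonal:
  "distinct S \<Longrightarrow> a \<noteq> a' \<Longrightarrow> b \<in> set S \<Longrightarrow> b' \<in> set S \<Longrightarrow>
    restr (List.product A S) (a, b) (a', b') = map (\<lambda>x. if x = a then (a, b) else (a', b')) (restr A a a')"
  by (induction A) (auto simp: restr_map_Pair_diagonal)

lemma restr_product_diagonal_ordered:
  assumes "distinct S" "restr A a a' = [a, a']" "a \<noteq> a'"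
  shows "restr (List.product A S) (a, b) (a', b') =
    (if b \<in> set S then [(a, b)] else []) @ (if b' \<in> set S then [(a', b')] else [])"
proof -
  have "restr (List.product A S) (a, b) (a', b') = restr (List.product (restr A a a') S) (a, b) (a', b')"
    by (induction A) (auto simp: restr_map_Pair_diagonal assms(1,3))
  then show ?thesis
    using assms by (simp add: restr_map_Pair_diagonal)
qed

section \<open>Rotation segments\<close>

text \<open>Rotation r of t followed by the letter t ! r reads t_r ... t_(m-1) t_0 ... t_r, so
consecutive pieces continue one another as copies of t; leaving out rotation k only loses one copy.\<close>

definition rotation_piece :: "'a list \<Rightarrow> nat \<Rightarrow> nat \<Rightarrow> 'a list list" where
  "rotation_piece t k r = (if r = k then [] else [rotate r t]) @ [[t ! r]]"

definition rotation_segments :: "'a list \<Rightarrow> nat \<Rightarrow> 'a list list" where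
  "rotation_segments t k = butlast (concat (map (rotation_piece t k) [0..<length t]))"

lemma rotate_eq_drop_take: "r < length t \<Longrightarrow> rotate r t = drop r t @ take r t"
  by (simp add: rotate_drop_take)

lemma concat_replicate_snoc: "concat (replicate n xs) @ xs = xs @ concat (replicate n xs)"
  by (induction n) auto

lemma concat_rotation_pieces:
  "r \<le> length t \<Longrightarrow> concat (concat (map (rotation_piece t k) [0..<r])) =
     concat (replicate (r - (if k < r then 1 else 0)) t) @ take r t"
proof (induction r)
  case (Suc r)
  then have r: "r < length t" by simp
  have "concat (rotation_piece t k r) = (if r = k then [] else drop r t @ take r t) @ [t ! r]"
    using r by (simp add: rotation_piece_def rotate_eq_drop_take)
  moreover have "take r t @ [t ! r] = take (Suc r) t"
    using r by (simp add: take_Suc_conv_app_nth)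
  ultimately show ?case
    using Suc r by (auto simp: concat_replicate_snoc Suc_diff_le)
qed simp

lemma concat_rotation_segments:
  assumes "k < length t"
  shows "concat (rotation_segments t k) @ [last t] = concat (replicate (length t) t)"
proof -
  define L where "L = concat (map (rotation_piece t k) [0..<length t])"
  have m: "length t = Suc (length t - 1)"
    using assms by simp
  have "L = concat (map (rotation_piece t k) [0..<length t - 1]) @ rotation_piece t k (length t - 1)"
    unfolding L_def by (subst m) simp
  moreover have "t \<noteq> []"
    using assms by auto
  ultimately have "L = butlast L @ [[last t]]"
    by (simp add: rotation_piece_def last_conv_nth butlast_append)
  then have "concat (rotation_segments t k) @ [last t] = concat L"
    unfolding rotation_segments_def L_def[symmetric] by (metis concat_append concat.simps append_Nil2)
  also have "\<dots> = concat (replicate (Suc (length t - 1)) t)"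
    using concat_rotation_pieces[of "length t" t k] assms by (simp add: L_def concat_replicate_snoc)
  also have "Suc (length t - 1) = length t"
    using assms by simp
  finally show ?thesis .
qed

lemma rotation_segments_cases:
  assumes "S \<in> set (rotation_segments t k)"
  obtains r where "r < length t" "S = rotate r t \<or> S = [t ! r]"
  using in_set_butlastD[OF assms[unfolded rotation_segments_def]]
  by (auto simp: rotation_piece_def split: if_splits)

lemma rotate_in_rotation_segments:
  assumes "r < length t" "r \<noteq> k"
  shows "rotate r t \<in> set (rotation_segments t k)"
proof -
  have "[0..<length t] = [0..<r] @ r # [Suc r..<length t]"
    using assms(1) by (metis upt_conv_Cons upt_add_eq_append le_add1 le_add_diff_inverse
        less_imp_le_nat add_0)
  moreover have "rotation_piece t k r = [rotate r t, [t ! r]]"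
    using assms(2) by (simp add: rotation_piece_def)
  ultimately have "rotation_segments t k = butlast (concat (map (rotation_piece t k) [0..<r])
      @ rotate r t # [t ! r] # concat (map (rotation_piece t k) [Suc r..<length t]))"
    by (simp add: rotation_segments_def)
  then show ?thesis
    by (simp add: butlast_append)
qed

lemma restr_upt:
  "i < j \<Longrightarrow> filter (\<lambda>y. y = i \<or> y = j) [a..<b] =
     (if a \<le> i \<and> i < b then [i] else []) @ (if a \<le> j \<and> j < b then [j] else [])"
  by (induction b) auto

lemma restr_rotate:
  assumes "distinct t" "i < j" "j < length t" "r < length t"
  shows "restr (rotate r t) (t ! i) (t ! j) =
    (if i < r \<and> r \<le> j then [t ! j, t ! i] else [t ! i, t ! j])"
proof -
  have nth_restr: "restr (map (nth t) L) (t ! i) (t ! j) = map (nth t) (filter (\<lambda>y. y = i \<or> y = j) L)"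
    if "\<forall>y\<in>set L. y < length t" for L
    using that assms by (induction L) (auto simp: nth_eq_iff_index_eq)
  have "rotate r t = map (nth t) [r..<length t] @ map (nth t) [0..<r]"
  proof -
    have "take r t = map (nth t) [0..<r]"
      using assms(4) by (metis map_nth take_map take_upt add_0 less_imp_le_nat)
    moreover have "drop r t = map (nth t) [r..<length t]"
      by (metis map_nth drop_map drop_upt add_0)
    ultimately show ?thesis
      using assms(4) by (simp add: rotate_eq_drop_take)
  qed
  then show ?thesis
    using assms by (simp add: nth_restr restr_upt)
qed

text \<open>For i < j, rotation r reverses the order of t ! i and t ! j iff i < r \<le> j, and a reversed
pair is needed exactly when both letters occur equally often in w. So rotation k can be left out
unless it is the only rotation with the required behaviour for some alternating pair:
(t ! (k - 1), t ! k) with equal counts, or for k = 0 the pair of first and last letter with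
different counts.\<close>

definition omissible :: "'a list \<Rightarrow> 'a list \<Rightarrow> nat \<Rightarrow> bool" where
  "omissible w t k \<longleftrightarrow> k < length t \<and>
     (if k = 0
      then \<not> (alternate w (t ! 0) (t ! (length t - 1)) \<and>
              count_list w (t ! 0) \<noteq> count_list w (t ! (length t - 1)))
      else \<not> (alternate w (t ! (k - 1)) (t ! k) \<and>
              count_list w (t ! (k - 1)) = count_list w (t ! k)))"

lemma omissible_exists:
  assumes "t \<noteq> []"
  shows "\<exists>k. omissible w t k"
proof (rule ccontr)
  assume none: "\<nexists>k. omissible w t k"
  then have ends: "count_list w (t ! 0) \<noteq> count_list w (t ! (length t - 1))"
    using assms spec[OF none[unfolded not_ex], of 0] by (simp add: omissible_def)
  have same: "count_list w (t ! k) = count_list w (t ! 0)" if "k < length t" for k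
    using that
  proof (induction k)
    case (Suc k)
    then have "\<not> omissible w t (Suc k)"
      using none by blast
    then have "count_list w (t ! k) = count_list w (t ! Suc k)"
      using Suc.prems by (simp add: omissible_def)
    with Suc show ?case by (metis Suc_lessD)
  qed simp
  from same[of "length t - 1"] show False
    using ends assms by simp
qed

lemma omissible_rotation:
  assumes omissible: "omissible w t k" and ij: "i < j" "j < length t"
    and alt: "alternate w (t ! i) (t ! j)"
  shows "\<exists>r < length t. r \<noteq> k \<and>
    (count_list w (t ! i) = count_list w (t ! j) \<longleftrightarrow> i < r \<and> r \<le> j)"
proof (cases "count_list w (t ! i) = count_list w (t ! j)")
  case True
  consider "j \<noteq> k" | "j = k" "i < k - 1" | "j = k" "i = k - 1"
    using ij by linarith
  then show ?thesis
  proof cases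
    case 1
    then show ?thesis using True ij by (intro exI[of _ j]) auto
  next
    case 2
    then show ?thesis using True ij by (intro exI[of _ "k - 1"]) auto
  next
    case 3
    then show ?thesis using True ij alt omissible by (simp add: omissible_def)
  qed
next
  case False
  consider "k \<noteq> 0" | "k = 0" "0 < i" | "k = 0" "i = 0" "j < length t - 1"
    | "k = 0" "i = 0" "j = length t - 1"
    using ij by linarith
  then show ?thesis
  proof cases
    case 1
    then show ?thesis using False ij by (intro exI[of _ 0]) auto
  next
    case 2
    then show ?thesis using False ij by (intro exI[of _ i]) auto
  next
    case 3
    then show ?thesis using False ij by (intro exI[of _ "length t - 1"]) auto
  next
    case 4
    then show ?thesis using False alt omissible by (simp add: omissible_def)
  qed
qed

lemma alternate_extends_to_rotation_segments:
  assumes "alternate w h h'" "h \<in> set w" "h' \<in> set w" "h \<noteq> h'" "k < length (remdups w)"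
  shows "no_adj_repeat (restr (w @ concat (rotation_segments (remdups w) k)) h h')"
proof -
  define t where "t = remdups w"
  define R where "R = restr (concat (rotation_segments t k)) h h'"
  obtain e l where el: "restr t h h' = [e, l]" "e \<noteq> l"
    using restr_distinct_cases[of t h h'] assms(2-4) by (auto simp: t_def)
  have last_w: "last (restr w h h') = l"
    using remdups_filter_last[where xs=w and P="\<lambda>z. z = h \<or> z = h'"] el by (simp add: t_def)
  have "R @ restr [last t] h h' = restr (concat (replicate (length t) t)) h h'"
    unfolding R_def using concat_rotation_segments[OF assms(5)[folded t_def]]
    by (metis filter_append)
  also have "\<dots> = concat (replicate (length t) [e, l])"
    using el by (simp add: filter_concat)
  finally have R: "R @ restr [last t] h h' = concat (replicate (length t) [e, l])" .
  have "length t > 0"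
    using assms(5) unfolding t_def by linarith
  then have "no_adj_repeat (R @ restr [last t] h h')" "hd (R @ restr [last t] h h') = e"
    unfolding R using no_adj_repeat_replicate_pair[OF el(2)] hd_replicate_pair[OF \<open>length t > 0\<close>]
    by auto
  then have "no_adj_repeat R" "R \<noteq> [] \<Longrightarrow> hd R = e"
    by (auto simp: no_adj_repeat_append)
  then show ?thesis
    using assms(1) last_w el(2) unfolding alternate_def
    by (auto simp: no_adj_repeat_append R_def t_def)
qed

text \<open>The alternating word restr w h h' ends with the later of h, h' in remdups w, so it starts
with the earlier one iff both occur equally often; omissible_rotation provides a rotation ordering
them the other way round.\<close>

lemma rotation_segments_reverse_pair:
  assumes alt: "alternate w h h'" and h: "h \<in> set w" "h' \<in> set w" "h \<noteq> h'"
    and omissible: "omissible w (remdups w) k" and hd: "hd (restr w h h') = h"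
  shows "\<exists>S\<in>set (rotation_segments (remdups w) k). restr S h h' = [h', h]"
proof -
  define t where "t = remdups w"
  define W where "W = restr w h h'"
  obtain i j where ij: "i < j" "j < length t" "{t ! i, t ! j} = {h, h'}"
    using pair_indices[of h t h'] h by (auto simp: t_def)
  have same_restr: "restr xs (t ! i) (t ! j) = restr xs h h'" for xs
    using ij(3) by (intro filter_cong) (auto simp: doubleton_eq_iff)
  have "t \<noteq> []"
    using h(1) by (auto simp: t_def)
  then have "restr t (t ! i) (t ! j) = [t ! i, t ! j]"
    using restr_rotate[of t i j 0] ij by (simp add: t_def)
  then have last_W: "last W = t ! j"
    using remdups_filter_last[where xs=w and P="\<lambda>z. z = h \<or> z = h'"] same_restr by (simp add: W_def t_def)
  have W: "W \<noteq> []" "no_adj_repeat W" "set W \<subseteq> {t ! i, t ! j}"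
    using alt h(1) ij(3) by (auto simp: W_def alternate_def filter_empty_conv)
  have "count_list w (t ! i) = count_list w (t ! j) \<longleftrightarrow> count_list W (t ! i) = count_list W (t ! j)"
    using ij(3) by (auto simp: W_def count_list_filter doubleton_eq_iff)
  also have "\<dots> \<longleftrightarrow> hd W = t ! i"
    using count_list_alternating[OF W(2,3)] W(1,3) last_W ij(1,2)
    by (auto simp: t_def nth_eq_iff_index_eq dest: hd_in_set)
  finally have count: "count_list w (t ! i) = count_list w (t ! j) \<longleftrightarrow> hd W = t ! i" .
  obtain r where r: "r < length t" "r \<noteq> k"
    "count_list w (t ! i) = count_list w (t ! j) \<longleftrightarrow> i < r \<and> r \<le> j"
    using omissible_rotation[OF omissible[folded t_def] ij(1,2)] alt same_restr
    unfolding alternate_def by metis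
  have "restr (rotate r t) h h' = [h', h]"
    using restr_rotate[of t i j r] same_restr ij r(1,3) count hd
    by (auto simp: t_def W_def doubleton_eq_iff)
  then show ?thesis
    using rotate_in_rotation_segments[OF r(1,2)] by (auto simp: t_def)
qed

section \<open>The word representing the Cartesian product\<close>

definition cart_segments :: "'b list \<Rightarrow> nat \<Rightarrow> 'b list list" where
  "cart_segments w k = map (\<lambda>b. [b]) w @ rotation_segments (remdups w) k"

text \<open>remdups u lists V(G) by last occurrence in u; rev (remdups (rev w)) lists V(H) by first
occurrence in w.\<close>

definition cart_word :: "'a list \<Rightarrow> 'b list \<Rightarrow> nat \<Rightarrow> ('a \<times> 'b) list" where
  "cart_word u w k = List.product u (rev (remdups (rev w)))
     @ concat (map (List.product (remdups u)) (cart_segments w k))"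

lemma concat_cart_segments:
  "concat (cart_segments w k) = w @ concat (rotation_segments (remdups w) k)"
  by (simp add: cart_segments_def)

lemma distinct_cart_segments: "S \<in> set (cart_segments w k) \<Longrightarrow> distinct S"
  by (auto simp: cart_segments_def elim: rotation_segments_cases)

lemma set_cart_segments: "S \<in> set (cart_segments w k) \<Longrightarrow> set S \<subseteq> set w"
  by (auto simp: cart_segments_def elim!: rotation_segments_cases) (metis nth_mem set_remdups)

lemma restr_cart_word:
  "restr (cart_word u w k) x y = restr (List.product u (rev (remdups (rev w)))) x y
     @ concat (map (\<lambda>S. restr (List.product (remdups u) S) x y) (cart_segments w k))"
  by (simp add: cart_word_def filter_concat comp_def)

lemma alternate_cart_word_same_snd_ordered:
  assumes "restr (remdups u) g g' = [g, g']" "g \<noteq> g'" "h \<in> set w"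
  shows "alternate (cart_word u w k) (g, h) (g', h) \<longleftrightarrow> alternate u g g'"
proof -
  define U where "U = restr u g g'"
  have "g \<in> set u"
    using assms(1) by (metis filter_is_subset list.set_intros(1) set_remdups subsetD)
  then have U: "U \<noteq> []" "last U = g'"
    using assms(1) remdups_filter_last[where xs=u and P="\<lambda>z. z = g \<or> z = g'"]
    by (auto simp: U_def filter_empty_conv)
  have "restr (cart_word u w k) (g, h) (g', h) =
      map (\<lambda>x. (x, h)) U @ concat (replicate (length (filter (\<lambda>S. h \<in> set S) (cart_segments w k)))
        [(g, h), (g', h)])"
    unfolding restr_cart_word concat_map_if_const[symmetric] U_def
    using assms(1,3) distinct_cart_segments[of _ w k]
    by (auto simp: restr_product_same_snd intro!: arg_cong[where f=concat] map_cong)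
  then have "alternate (cart_word u w k) (g, h) (g', h) \<longleftrightarrow> no_adj_repeat (map (\<lambda>x. (x, h)) U
      @ concat (replicate (length (filter (\<lambda>S. h \<in> set S) (cart_segments w k))) [(g, h), (g', h)]))"
    by (simp add: alternate_def)
  also have "\<dots> \<longleftrightarrow> no_adj_repeat (map (\<lambda>x. (x, h)) U)"
    using assms(2) U by (intro no_adj_repeat_append_replicate_pair) (auto simp: last_map)
  also have "\<dots> \<longleftrightarrow> no_adj_repeat U"
    by (rule no_adj_repeat_map) (auto simp: inj_on_def)
  finally show ?thesis
    by (simp add: alternate_def U_def)
qed

lemma alternate_cart_word_same_snd:
  assumes "g \<in> set u" "g' \<in> set u" "g \<noteq> g'" "h \<in> set w"
  shows "alternate (cart_word u w k) (g, h) (g', h) \<longleftrightarrow> alternate u g g'"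
  using assms(1-3)
proof (cases rule: restr_remdups_cases)
  case 1
  show ?thesis
    by (rule alternate_cart_word_same_snd_ordered[OF 1 assms(3,4)])
next
  case 2
  show ?thesis
    using alternate_cart_word_same_snd_ordered[OF 2 _ assms(4)] assms(3) alternate_commute by metis
qed

lemma alternate_cart_word_same_fst:
  assumes "g \<in> set u" "h \<in> set w" "h' \<in> set w" "h \<noteq> h'" "k < length (remdups w)"
  shows "alternate (cart_word u w k) (g, h) (g, h') \<longleftrightarrow> alternate w h h'"
proof -
  define V where "V = restr (w @ concat (rotation_segments (remdups w) k)) h h'"
  define p where "p = hd (restr w h h')"
  have "restr w h h' \<noteq> []"
    using assms(2) by (auto simp: filter_empty_conv)
  then have V: "V \<noteq> []" "hd V = p"
    by (auto simp: V_def p_def)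
  obtain q where pq: "restr (rev (remdups (rev w))) h h' = [p, q]" "p \<noteq> q"
    using restr_distinct_cases[of "rev (remdups (rev w))" h h'] assms(2-4)
      hd_restr_first_occurrences[where w=w and x=h and y=h']
    by (auto simp: p_def)
  have "restr (cart_word u w k) (g, h) (g, h') =
      concat (replicate (count_list u g) [(g, p), (g, q)]) @ map (Pair g) V"
  proof -
    have "concat (map (\<lambda>S. map (Pair g) (restr S h h')) (cart_segments w k)) = map (Pair g) V"
      by (simp add: V_def map_concat filter_concat comp_def flip: concat_cart_segments)
    then show ?thesis
      using assms(1) count_list_distinct[of "remdups u" g]
      by (simp add: restr_cart_word restr_product_same_fst pq)
  qed
  moreover have "count_list u g > 0"
    using assms(1) count_list_0_iff[of u g] by simp
  ultimately have "alternate (cart_word u w k) (g, h) (g, h') \<longleftrightarrow> no_adj_repeat (map (Pair g) V)"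
    unfolding alternate_def using pq(2) V
    by (simp add: no_adj_repeat_replicate_pair_append hd_map)
  also have "\<dots> \<longleftrightarrow> no_adj_repeat V"
    by (rule no_adj_repeat_map) (auto simp: inj_on_def)
  also have "\<dots> \<longleftrightarrow> alternate w h h'"
    using alternate_extends_to_rotation_segments[OF _ assms(2-5)]
    by (auto simp: V_def alternate_def no_adj_repeat_append)
  finally show ?thesis .
qed

lemma restr_cart_word_diagonal:
  assumes "restr (remdups u) g g' = [g, g']" "g \<noteq> g'" "h \<in> set w" "h' \<in> set w" "h \<noteq> h'"
  shows "restr (cart_word u w k) (g, h) (g', h') =
    map (\<lambda>z. if z = g then (g, h) else (g', h')) (restr u g g')
    @ map (\<lambda>z. if z = h then (g, h) else (g', h')) (restr w h h')
    @ concat (map (\<lambda>S. (if h \<in> set S then [(g, h)] else []) @ (if h' \<in> set S then [(g', h')] else []))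
        (rotation_segments (remdups w) k))"
proof -
  have "concat (map (\<lambda>b. restr (List.product (remdups u) [b]) (g, h) (g', h')) w) =
      map (\<lambda>z. if z = h then (g, h) else (g', h')) (restr w h h')"
    using assms(1,2,5) by (induction w) (auto simp: restr_product_diagonal_ordered)
  moreover have "concat (map (\<lambda>S. restr (List.product (remdups u) S) (g, h) (g', h'))
      (rotation_segments (remdups w) k)) =
    concat (map (\<lambda>S. (if h \<in> set S then [(g, h)] else []) @ (if h' \<in> set S then [(g', h')] else []))
      (rotation_segments (remdups w) k))"
    using assms(1,2) distinct_cart_segments[of _ w k]
    by (intro arg_cong[where f=concat] map_cong)
      (auto simp: cart_segments_def restr_product_diagonal_ordered)
  ultimately show ?thesis
    using assms by (simp add: restr_cart_word cart_segments_def restr_product_diagonal comp_def)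
qed

text \<open>If every segment contributed x, y in the order in which h, h' occur in it, the word would be
ys followed by the image of the alternating word restr (w @ concat segments) h h'. The segment in
which h' precedes h contributes x y instead of y x and thereby creates a repetition.\<close>

lemma rotation_segments_break_diagonal_alternation:
  assumes alt_w: "alternate w h h'" and h: "h \<in> set w" "h' \<in> set w" "h \<noteq> h'"
    and omissible: "omissible w (remdups w) k" and hd_w: "hd (restr w h h') = h"
    and ys: "ys \<noteq> []" "set ys \<subseteq> {x, y}" "no_adj_repeat ys" "last ys = y" and "x \<noteq> y"
  shows "\<not> no_adj_repeat ((ys @ map (\<lambda>z. if z = h then x else y) (restr w h h'))
    @ concat (map (\<lambda>S. (if h \<in> set S then [x] else []) @ (if h' \<in> set S then [y] else []))
        (rotation_segments (remdups w) k)))"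
proof -
  define \<psi> where "\<psi> = (\<lambda>z. if z = h then x else y)"
  define f where "f = (\<lambda>S. map \<psi> (restr S h h'))"
  define segs where "segs = rotation_segments (remdups w) k"
  define V where "V = restr (w @ concat segs) h h'"
  obtain S0 where S0: "S0 \<in> set segs" "restr S0 h h' = [h', h]"
    using rotation_segments_reverse_pair[OF alt_w h omissible hd_w] by (auto simp: segs_def)
  have "restr w h h' \<noteq> []"
    using h(1) by (auto simp: filter_empty_conv)
  then have hd_V: "hd (map \<psi> V) = x"
    using hd_w by (simp add: V_def hd_map \<psi>_def)
  have "inj_on \<psi> (set V)"
    using \<open>x \<noteq> y\<close> by (auto simp: inj_on_def \<psi>_def V_def)
  moreover have "no_adj_repeat V"
    using alternate_extends_to_rotation_segments[OF alt_w h] omissible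
    by (simp add: V_def segs_def omissible_def)
  ultimately have "no_adj_repeat (map \<psi> V)"
    by (simp add: no_adj_repeat_map)
  moreover have "(ys @ map \<psi> (restr w h h')) @ concat (map f segs) = ys @ map \<psi> V"
    by (simp add: V_def f_def map_concat filter_concat comp_def)
  ultimately have "no_adj_repeat ((ys @ map \<psi> (restr w h h')) @ concat (map f segs))"
    using ys hd_V \<open>x \<noteq> y\<close> by (simp add: no_adj_repeat_append)
  moreover have "(if h \<in> set S then [x] else []) @ (if h' \<in> set S then [y] else []) =
      (if f S = [y, x] then [x, y] else f S)" if "S \<in> set segs" for S
    using that distinct_cart_segments[of S w k] diagonal_segment_conv_restr[of S h h' x y] h(3) \<open>x \<noteq> y\<close>
    by (simp add: cart_segments_def segs_def f_def \<psi>_def Let_def)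
  moreover have "f S0 = [y, x]"
    using S0(2) h(3) by (simp add: f_def \<psi>_def)
  ultimately show ?thesis
    using ys S0(1) unfolding \<psi>_def[symmetric] segs_def[symmetric]
    by (intro no_adj_repeat_swap_segment[where f=f]) (auto simp: f_def \<psi>_def)
qed

lemma not_alternate_cart_word_diagonal_ordered:
  assumes ord: "restr (remdups u) g g' = [g, g']" and "g \<noteq> g'"
    and h: "h \<in> set w" "h' \<in> set w" "h \<noteq> h'" and omissible: "omissible w (remdups w) k"
  shows "\<not> alternate (cart_word u w k) (g, h) (g', h')"
proof
  define U where "U = map (\<lambda>z. if z = g then (g, h) else (g', h')) (restr u g g')"
  define \<psi> where "\<psi> = (\<lambda>z. if z = h then (g, h) else (g', h'))"
  define W where "W = restr w h h'"
  have "g \<in> set u"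
    using ord by (metis filter_is_subset list.set_intros(1) set_remdups subsetD)
  then have "restr u g g' \<noteq> []"
    by (auto simp: filter_empty_conv)
  then have U: "U \<noteq> []" "last U = (g', h')" "set U \<subseteq> {(g, h), (g', h')}"
    using ord remdups_filter_last[where xs=u and P="\<lambda>z. z = g \<or> z = g'"] \<open>g \<noteq> g'\<close>
    by (auto simp: U_def last_map)
  have W: "W \<noteq> []" "set W \<subseteq> {h, h'}"
    using h(1) by (auto simp: W_def filter_empty_conv)
  assume "alternate (cart_word u w k) (g, h) (g', h')"
  then have alt: "no_adj_repeat ((U @ map \<psi> W) @ concat (map (\<lambda>S.
      (if h \<in> set S then [(g, h)] else []) @ (if h' \<in> set S then [(g', h')] else []))
      (rotation_segments (remdups w) k)))"
    by (simp add: alternate_def restr_cart_word_diagonal[OF ord \<open>g \<noteq> g'\<close> h(1-3)] U_def W_def \<psi>_def)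
  then have "no_adj_repeat U" "no_adj_repeat (map \<psi> W)" "last U \<noteq> hd (map \<psi> W)"
    using U W by (simp_all add: no_adj_repeat_append)
  have "inj_on \<psi> (set W)"
    using W(2) h(3) \<open>g \<noteq> g'\<close> by (auto simp: inj_on_def \<psi>_def)
  then have "alternate w h h'"
    using \<open>no_adj_repeat (map \<psi> W)\<close> by (simp add: no_adj_repeat_map alternate_def W_def)
  have "hd W \<in> {h, h'}"
    using W hd_in_set by blast
  then have "hd W = h"
    using \<open>last U \<noteq> hd (map \<psi> W)\<close> U(2) W(1) h(3) by (auto simp: \<psi>_def hd_map)
  from rotation_segments_break_diagonal_alternation[OF \<open>alternate w h h'\<close> h omissible
      this[unfolded W_def] U(1,3) \<open>no_adj_repeat U\<close> U(2)] alt \<open>g \<noteq> g'\<close>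
  show False
    by (simp add: W_def \<psi>_def)
qed

lemma not_alternate_cart_word_diagonal:
  assumes "g \<in> set u" "g' \<in> set u" "g \<noteq> g'" "h \<in> set w" "h' \<in> set w" "h \<noteq> h'"
    and "omissible w (remdups w) k"
  shows "\<not> alternate (cart_word u w k) (g, h) (g', h')"
  using assms(1-3)
proof (cases rule: restr_remdups_cases)
  case 1
  show ?thesis
    by (rule not_alternate_cart_word_diagonal_ordered[OF 1 assms(3-7)])
next
  case 2
  show ?thesis
    using not_alternate_cart_word_diagonal_ordered[OF 2 _ assms(5,4) _ assms(7)] assms(3,6)
      alternate_commute by metis
qed

lemma represents_cart_word:
  assumes u: "represents VG EG u" and w: "represents VH EH w"
    and omissible: "omissible w (remdups w) k"
  shows "represents (VG \<times> VH) (cart_edge EG EH) (cart_word u w k)"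
  unfolding represents_def
proof (intro conjI ballI impI)
  have su: "set u = VG" and sw: "set w = VH"
    using u w by (simp_all add: represents_def)
  show "set (cart_word u w k) = VG \<times> VH"
    using set_cart_segments[of _ w k] by (auto simp: cart_word_def su sw)
  fix p q assume "p \<in> VG \<times> VH" "q \<in> VG \<times> VH" "p \<noteq> q"
  then obtain g h g' h' where pq: "p = (g, h)" "q = (g', h')" "g \<in> set u" "g' \<in> set u"
      "h \<in> set w" "h' \<in> set w" "(g, h) \<noteq> (g', h')"
    using su sw by auto
  have k: "k < length (remdups w)"
    using omissible by (simp add: omissible_def)
  consider "g = g'" "h \<noteq> h'" | "g \<noteq> g'" "h = h'" | "g \<noteq> g'" "h \<noteq> h'"
    using pq(7) by auto
  then show "cart_edge EG EH p q \<longleftrightarrow> alternate (cart_word u w k) p q"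
  proof cases
    case 1
    then show ?thesis
      using w alternate_cart_word_same_fst[OF pq(3,5,6) 1(2) k] pq
      by (auto simp: cart_edge_def represents_def)
  next
    case 2
    then show ?thesis
      using u alternate_cart_word_same_snd[OF pq(3,4) 2(1) pq(5)] pq
      by (auto simp: cart_edge_def represents_def)
  next
    case 3
    then show ?thesis
      using not_alternate_cart_word_diagonal[OF pq(3,4) 3(1) pq(5,6) 3(2) omissible] pq
      by (auto simp: cart_edge_def)
  qed
qed

lemma length_cart_word:
  assumes "k < length (remdups w)"
  shows "length (cart_word u w k) = card (set w) * length u + card (set u) * length w
    + (card (set w) ^ 2 - 1) * card (set u)"
proof -
  have "length (concat (rotation_segments (remdups w) k)) + 1 = card (set w) ^ 2"
    using arg_cong[OF concat_rotation_segments[OF assms], of length]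
    by (simp add: length_concat sum_list_replicate length_remdups_card_conv power2_eq_square)
  then have segments: "length (concat (rotation_segments (remdups w) k)) = card (set w) ^ 2 - 1"
    by simp
  have "length (concat (map (List.product (remdups u)) Ws)) = card (set u) * length (concat Ws)" for Ws
    by (induction Ws) (simp_all add: length_remdups_card_conv algebra_simps)
  from this[of "cart_segments w k"] have "length (cart_word u w k) =
      length u * card (set w) + card (set u) * (length w + (card (set w) ^ 2 - 1))"
    by (simp add: cart_word_def concat_cart_segments segments length_remdups_card_conv
        del: length_concat)
  then show ?thesis
    by (simp add: algebra_simps)
qed

lemma min_rep_length_le: "represents V E w \<Longrightarrow> min_rep_length V E \<le> length w"
  unfolding min_rep_length_def by (rule Least_le) blast

lemma min_rep_length_attained:
  assumes "word_representable V E"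
  obtains w where "represents V E w" "length w = min_rep_length V E"
  using LeastI_ex[of "\<lambda>n. \<exists>w. represents V E w \<and> length w = n"] assms
  unfolding word_representable_def min_rep_length_def by blast

theorem mainTheorem7:
  fixes VG :: "'a set" and EG :: "'a \<Rightarrow> 'a \<Rightarrow> bool"
    and VH :: "'b set" and EH :: "'b \<Rightarrow> 'b \<Rightarrow> bool"
  assumes "simple_graph VG EG" and "simple_graph VH EH"
    and "VG \<noteq> {}" and "VH \<noteq> {}"
    and "word_representable VG EG" and "word_representable VH EH"
    and "card VG \<ge> card VH"
  shows "min_rep_length (VG \<times> VH) (cart_edge EG EH)
           \<le> card VH * min_rep_length VG EG + card VG * min_rep_length VH EH
              + (card VH ^ 2 - 1) * card VG"
proof -
  obtain u where u: "represents VG EG u" "length u = min_rep_length VG EG"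
    using min_rep_length_attained[OF assms(5)] .
  obtain w where w: "represents VH EH w" "length w = min_rep_length VH EH"
    using min_rep_length_attained[OF assms(6)] .
  have "remdups w \<noteq> []"
    using w(1) assms(4) by (auto simp: represents_def)
  then obtain k where k: "omissible w (remdups w) k"
    using omissible_exists by blast
  have "min_rep_length (VG \<times> VH) (cart_edge EG EH) \<le> length (cart_word u w k)"
    by (rule min_rep_length_le[OF represents_cart_word[OF u(1) w(1) k]])
  also have "\<dots> = card VH * min_rep_length VG EG + card VG * min_rep_length VH EH
      + (card VH ^ 2 - 1) * card VG"
    using length_cart_word[of k w u] k u w by (simp add: omissible_def represents_def)
  finally show ?thesis .
qed

end
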